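(* Let $m\geq 1$, let $x_1,\ldots,x_m\in\{0,1\}$ with $x_j\neq x_{j+1}$ for $1\le j<m$ and $x_m=1$, and let $k_1,\ldots,k_m$ be positive integers with $k_1\geq 2$. Let $G$ be the threshold graph generated by the binary sequence $x_1^{k_1},x_2^{k_2},\ldots,x_m^{k_m}$, and let $n=k_1+\cdots+k_m$ be its number of vertices. Then \[ \operatorname{cdim}(G)=\begin{cases} n-m & \text{if } k_m>1,\\ n-m+1 & \text{if } k_m=1.\end{cases} \]
   Context: All graphs are finite, simple, undirected and nonempty. A threshold graph on $n$ vertices is generated by a binary sequence $y_1,\ldots,y_n\in\{0,1\}$: starting from the empty graph, in step $i$ one adds a new vertex which is isolated if $y_i=0$ and adjacent to all previously added vertices if $y_i=1$. The notation $x_1^{k_1},\ldots,x_m^{k_m}$ denotes the binary sequence consisting of $k_1$ copies of $x_1$, followed by $k_2$ copies of $x_2$, etc. For distinct vertices $v,w$, $\kappa(v,w)$ is the maximum number of internally vertex-disjoint $v$–$w$ paths (an edge $vw$ counts as one such path); $\kappa(v,v)=\infty$. For an ordered vertex set $W=(w_1,\ldots,w_k)$, $r_G(v,W)=[\kappa(v,w_1),\ldots,\kappa(v,w_k)]$. $W$ is resolving if $r_G(v_1,W)=r_G(v_2,W)$ implies $v_1=v_2$. The connectivity dimension $\operatorname{cdim}(G)$ is the minimum cardinality of a resolving set. *)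

theory Defs
  imports Main "HOL-Library.Extended_Nat"
begin

text \<open>A finite simple graph is given by a vertex set V and a symmetric irreflexive
adjacency relation adj.\<close>

definition is_path :: "'a set \<Rightarrow> ('a \<Rightarrow> 'a \<Rightarrow> bool) \<Rightarrow> 'a \<Rightarrow> 'a \<Rightarrow> 'a list \<Rightarrow> bool" where
  "is_path V adj v w p \<longleftrightarrow> p \<noteq> [] \<and> distinct p \<and> set p \<subseteq> V \<and> hd p = v \<and> last p = w
     \<and> (\<forall>i. Suc i < length p \<longrightarrow> adj (p ! i) (p ! Suc i))"

definition interior :: "'a list \<Rightarrow> 'a set" where
  "interior p = set (butlast (tl p))"

definition disjoint_path_family :: "'a set \<Rightarrow> ('a \<Rightarrow> 'a \<Rightarrow> bool) \<Rightarrow> 'a \<Rightarrow> 'a \<Rightarrow> 'a list set \<Rightarrow> bool" where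
  "disjoint_path_family V adj v w P \<longleftrightarrow> (\<forall>p\<in>P. is_path V adj v w p)
     \<and> (\<forall>p\<in>P. \<forall>q\<in>P. p \<noteq> q \<longrightarrow> interior p \<inter> interior q = {})"

definition kappa :: "'a set \<Rightarrow> ('a \<Rightarrow> 'a \<Rightarrow> bool) \<Rightarrow> 'a \<Rightarrow> 'a \<Rightarrow> enat" where
  "kappa V adj v w = (if v = w then \<infinity>
     else enat (Max {card P | P. finite P \<and> disjoint_path_family V adj v w P}))"

definition rep :: "'a set \<Rightarrow> ('a \<Rightarrow> 'a \<Rightarrow> bool) \<Rightarrow> 'a \<Rightarrow> 'a list \<Rightarrow> enat list" where
  "rep V adj v W = map (kappa V adj v) W"

definition resolving :: "'a set \<Rightarrow> ('a \<Rightarrow> 'a \<Rightarrow> bool) \<Rightarrow> 'a list \<Rightarrow> bool" where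
  "resolving V adj W \<longleftrightarrow> set W \<subseteq> V \<and>
     (\<forall>v1\<in>V. \<forall>v2\<in>V. rep V adj v1 W = rep V adj v2 W \<longrightarrow> v1 = v2)"

definition cdim :: "'a set \<Rightarrow> ('a \<Rightarrow> 'a \<Rightarrow> bool) \<Rightarrow> nat" where
  "cdim V adj = (LEAST c. \<exists>W. distinct W \<and> length W = c \<and> resolving V adj W)"

text \<open>Threshold graph generated by a 0/1 sequence ys (vertex i, 0-indexed, is added in step i+1).\<close>
definition thr_vertices :: "nat list \<Rightarrow> nat set" where
  "thr_vertices ys = {..<length ys}"

definition thr_adj :: "nat list \<Rightarrow> nat \<Rightarrow> nat \<Rightarrow> bool" where
  "thr_adj ys i j \<longleftrightarrow> i \<noteq> j \<and> i < length ys \<and> j < length ys \<and> ys ! (max i j) = 1"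

definition block_seq :: "nat \<Rightarrow> (nat \<Rightarrow> nat) \<Rightarrow> (nat \<Rightarrow> nat) \<Rightarrow> nat list" where
  "block_seq m x k = concat (map (\<lambda>j. replicate (k j) (x j)) [1..<Suc m])"

end

theory Submission
  imports Defs "HOL-Combinatorics.Transposition"
begin

(* The last vertex t is universal, so kappa(v, t) = deg v; more generally kappa(v, w) = deg w
   whenever N(w) - {v} is contained in N(v), the paths v-z-w (and the edge vw) being internally
   disjoint. Vertices of one block are twins: swapping them is an automorphism, so they have
   equal connectivities to every other vertex, and a resolving set misses at most one vertex
   per block; hence cdim >= n - m. Conversely, neighbourhoods in a threshold graph are nested,
   so vertices of different blocks have different degrees, and deleting the first vertex of
   every block leaves a resolving set as long as t is not deleted, i.e. when k_m > 1.
   If k_m = 1, the vertices of block m - 2 (block 1 if m = 2) have the same connectivity as t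
   to every other vertex, so a resolving set must moreover contain t or that whole block. *)

definition nbhd :: "'a set \<Rightarrow> ('a \<Rightarrow> 'a \<Rightarrow> bool) \<Rightarrow> 'a \<Rightarrow> 'a set" where
  "nbhd V adj v = {z \<in> V. adj v z}"

lemma finite_nbhd: "finite V \<Longrightarrow> finite (nbhd V adj v)"
  by (simp add: nbhd_def)

lemma is_path_second_vertex:
  assumes p: "is_path V adj v w p" and "v \<noteq> w"
  shows "p ! 1 \<in> nbhd V adj v"
    and "p ! 1 = w \<Longrightarrow> p = [v, w]"
    and "p ! 1 \<noteq> w \<Longrightarrow> p ! 1 \<in> interior p"
proof -
  obtain y rest where p_eq: "p = v # y # rest"
    using p \<open>v \<noteq> w\<close> by (cases p; cases "tl p") (auto simp: is_path_def)
  have "adj v y" "y \<in> V" "distinct p" "last p = w"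
    using p[unfolded is_path_def] by (auto simp: p_eq dest: spec[of _ 0])
  then show "p ! 1 \<in> nbhd V adj v"
    by (simp add: nbhd_def p_eq)
  have "y = w \<longleftrightarrow> rest = []"
    using \<open>distinct p\<close> \<open>last p = w\<close> by (cases rest rule: rev_cases) (auto simp: p_eq)
  then show "p ! 1 = w \<Longrightarrow> p = [v, w]" "p ! 1 \<noteq> w \<Longrightarrow> p ! 1 \<in> interior p"
    by (auto simp: p_eq interior_def)
qed

lemma card_disjoint_path_family_le_degree:
  assumes "finite V" "v \<noteq> w" and P: "disjoint_path_family V adj v w P"
  shows "card P \<le> card (nbhd V adj v)"
proof -
  have paths: "\<And>p. p \<in> P \<Longrightarrow> is_path V adj v w p"
    using P by (simp add: disjoint_path_family_def)
  have "inj_on (\<lambda>p. p ! 1) P"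
  proof (rule inj_onI)
    fix p q assume pq: "p \<in> P" "q \<in> P" "p ! 1 = q ! 1"
    show "p = q"
    proof (cases "p ! 1 = w")
      case True
      then show ?thesis
        using is_path_second_vertex(2)[OF paths[OF pq(1)] \<open>v \<noteq> w\<close>]
          is_path_second_vertex(2)[OF paths[OF pq(2)] \<open>v \<noteq> w\<close>] pq(3) by simp
    next
      case False
      have "p ! 1 \<in> interior p"
        using is_path_second_vertex(3)[OF paths[OF pq(1)] \<open>v \<noteq> w\<close>] False by blast
      moreover have "p ! 1 \<in> interior q"
        using is_path_second_vertex(3)[OF paths[OF pq(2)] \<open>v \<noteq> w\<close>] False pq(3) by simp
      ultimately show ?thesis
        using P pq(1,2) unfolding disjoint_path_family_def by blast
    qed
  qed
  moreover have "(\<lambda>p. p ! 1) ` P \<subseteq> nbhd V adj v"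
    using is_path_second_vertex(1)[OF paths \<open>v \<noteq> w\<close>] by blast
  ultimately show ?thesis
    using card_inj_on_le[of "\<lambda>p. p ! 1" P] finite_nbhd[OF \<open>finite V\<close>] by blast
qed

lemma
  assumes "finite V" "v \<noteq> w"
  shows kappa_attained: "\<exists>P. finite P \<and> disjoint_path_family V adj v w P \<and> kappa V adj v w = card P"
    and kappa_ge_card: "finite P \<Longrightarrow> disjoint_path_family V adj v w P \<Longrightarrow> card P \<le> kappa V adj v w"
proof -
  let ?S = "{card P | P. finite P \<and> disjoint_path_family V adj v w P}"
  have kappa_Max: "kappa V adj v w = Max ?S"
    using \<open>v \<noteq> w\<close> by (simp add: kappa_def)
  have "?S \<subseteq> {..card (nbhd V adj v)}"
    using card_disjoint_path_family_le_degree[OF assms] by auto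
  then have "finite ?S"
    using finite_subset by blast
  have "disjoint_path_family V adj v w {}"
    by (simp add: disjoint_path_family_def)
  then have "card {} \<in> ?S"
    by (intro CollectI exI[of _ "{}"]) simp
  then have "Max ?S \<in> ?S"
    using Max_in[OF \<open>finite ?S\<close>] by blast
  then show "\<exists>P. finite P \<and> disjoint_path_family V adj v w P \<and> kappa V adj v w = card P"
    using kappa_Max by auto
  show "finite P \<Longrightarrow> disjoint_path_family V adj v w P \<Longrightarrow> card P \<le> kappa V adj v w"
    using Max_ge[OF \<open>finite ?S\<close>] kappa_Max by auto
qed

lemma kappa_le_degree:
  assumes "finite V" "v \<noteq> w"
  shows "kappa V adj v w \<le> card (nbhd V adj v)"
  using kappa_attained[OF assms, of adj] card_disjoint_path_family_le_degree[OF assms, of adj]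
  by fastforce

lemma kappa_mono_by_transfer:
  assumes "finite V" "v \<noteq> w" "v' \<noteq> w'"
    and transfer: "\<And>P. finite P \<Longrightarrow> disjoint_path_family V adj v w P \<Longrightarrow>
      \<exists>P'. finite P' \<and> disjoint_path_family V adj v' w' P' \<and> card P \<le> card P'"
  shows "kappa V adj v w \<le> kappa V adj v' w'"
proof -
  obtain P where P: "finite P" "disjoint_path_family V adj v w P" "kappa V adj v w = card P"
    using kappa_attained[OF assms(1,2)] by blast
  obtain P' where P': "finite P'" "disjoint_path_family V adj v' w' P'" "card P \<le> card P'"
    using transfer[OF P(1,2)] by blast
  have "kappa V adj v w \<le> card P'"
    using P(3) P'(3) by simp
  also have "\<dots> \<le> kappa V adj v' w'"
    using kappa_ge_card[OF assms(1,3) P'(1,2)] .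
  finally show ?thesis .
qed

lemma interior_rev: "interior (rev p) = interior p"
proof -
  have "butlast (tl (rev p)) = rev (tl (butlast p))"
    by (metis butlast_rev rev_rev_ident)
  then show ?thesis
    by (simp add: interior_def butlast_tl)
qed

lemma is_path_rev:
  assumes p: "is_path V adj v w p" and sym: "\<And>a b. adj a b \<Longrightarrow> adj b a"
  shows "is_path V adj w v (rev p)"
  unfolding is_path_def
proof (intro conjI allI impI)
  show "rev p \<noteq> []" "distinct (rev p)" "set (rev p) \<subseteq> V" "hd (rev p) = w" "last (rev p) = v"
    using p by (auto simp: is_path_def hd_rev last_rev)
  fix i assume i: "Suc i < length (rev p)"
  define j where "j = length p - Suc (Suc i)"
  have "adj (p ! j) (p ! Suc j)"
    using p i unfolding is_path_def j_def by auto
  moreover have "rev p ! i = p ! Suc j" "rev p ! Suc i = p ! j"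
    using i by (auto simp: rev_nth j_def Suc_diff_Suc)
  ultimately show "adj (rev p ! i) (rev p ! Suc i)"
    using sym by simp
qed

lemma kappa_commute:
  assumes "finite V" and sym: "\<And>a b. adj a b \<Longrightarrow> adj b a"
  shows "kappa V adj v w = kappa V adj w v"
proof -
  have le: "kappa V adj v w \<le> kappa V adj w v" if "v \<noteq> w" for v w
  proof (rule kappa_mono_by_transfer[OF \<open>finite V\<close> that not_sym[OF that]])
    fix P assume "finite P" "disjoint_path_family V adj v w P"
    then have "finite (rev ` P)" "disjoint_path_family V adj w v (rev ` P)"
      "card (rev ` P) = card P"
      using is_path_rev[of V adj v w, OF _ sym]
      by (auto simp: disjoint_path_family_def interior_rev card_image)
    then show "\<exists>P'. finite P' \<and> disjoint_path_family V adj w v P' \<and> card P \<le> card P'"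
      by auto
  qed
  show ?thesis
  proof (cases "v = w")
    case False
    then show ?thesis
      using le[of v w] le[of w v] by simp
  qed simp
qed

lemma interior_map: "interior (map f p) = f ` interior p"
  by (simp add: interior_def flip: map_tl map_butlast)

lemma disjoint_path_family_map:
  assumes "inj s" "s ` V \<subseteq> V" and adj_s: "\<And>a b. adj (s a) (s b) \<longleftrightarrow> adj a b"
    and P: "disjoint_path_family V adj v w P"
  shows "disjoint_path_family V adj (s v) (s w) (map s ` P)"
  unfolding disjoint_path_family_def
proof (intro conjI ballI impI)
  fix p' assume "p' \<in> map s ` P"
  then obtain p where "p \<in> P" "p' = map s p"
    by blast
  then have "is_path V adj v w p"
    using P by (simp add: disjoint_path_family_def)
  then show "is_path V adj (s v) (s w) p'"
    using \<open>p' = map s p\<close> \<open>inj s\<close> \<open>s ` V \<subseteq> V\<close> adj_s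
    by (auto simp: is_path_def hd_map last_map distinct_map inj_on_def image_subset_iff)
next
  fix p' q' assume "p' \<in> map s ` P" "q' \<in> map s ` P" "p' \<noteq> q'"
  then obtain p q where "p \<in> P" "q \<in> P" "p \<noteq> q" "p' = map s p" "q' = map s q"
    by blast
  then have "interior p \<inter> interior q = {}"
    using P by (simp add: disjoint_path_family_def)
  moreover have "interior p' \<inter> interior q' = s ` (interior p \<inter> interior q)"
    using \<open>p' = map s p\<close> \<open>q' = map s q\<close> by (simp add: interior_map image_Int[OF \<open>inj s\<close>])
  ultimately show "interior p' \<inter> interior q' = {}"
    by simp
qed

lemma kappa_involution_invariant:
  assumes "finite V" and invol: "\<And>a. s (s a) = a" and "s ` V \<subseteq> V"
    and adj_s: "\<And>a b. adj (s a) (s b) \<longleftrightarrow> adj a b"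
  shows "kappa V adj (s v) (s w) = kappa V adj v w"
proof -
  have "inj s"
    by (rule injI) (metis invol)
  have le: "kappa V adj v w \<le> kappa V adj (s v) (s w)" if "v \<noteq> w" "s v \<noteq> s w" for v w
  proof (rule kappa_mono_by_transfer[OF \<open>finite V\<close> that])
    fix P assume "finite P" and P: "disjoint_path_family V adj v w P"
    have "disjoint_path_family V adj (s v) (s w) (map s ` P)"
      using disjoint_path_family_map[of s V adj, OF \<open>inj s\<close> \<open>s ` V \<subseteq> V\<close> adj_s P] .
    moreover have "card (map s ` P) = card P"
      using card_image[OF inj_on_subset[OF inj_mapI[OF \<open>inj s\<close>] subset_UNIV]] .
    ultimately show "\<exists>P'. finite P' \<and> disjoint_path_family V adj (s v) (s w) P' \<and> card P \<le> card P'"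
      using \<open>finite P\<close> by auto
  qed
  show ?thesis
  proof (cases "v = w")
    case False
    then have "s v \<noteq> s w"
      by (metis invol)
    then show ?thesis
      using le[OF False] le[of "s v" "s w"] False by (simp add: invol)
  qed (simp add: kappa_def)
qed

lemma card_nbhd_remove:
  assumes "finite V" "u' \<in> V"
  shows "card (nbhd V adj u) = card (nbhd V adj u - {u'}) + (if adj u u' then 1 else 0)"
proof (cases "adj u u'")
  case True
  then have "u' \<in> nbhd V adj u"
    using assms(2) by (simp add: nbhd_def)
  then show ?thesis
    using card_Suc_Diff1[OF finite_nbhd[OF \<open>finite V\<close>]] True by simp
next
  case False
  then have "nbhd V adj u - {u'} = nbhd V adj u"
    by (auto simp: nbhd_def)
  then show ?thesis
    using False by simp
qed

lemma is_path_length_3: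
  assumes "adj v z" "adj z w" "distinct [v, z, w]" "set [v, z, w] \<subseteq> V"
  shows "is_path V adj v w [v, z, w]"
proof -
  have "adj ([v, z, w] ! i) ([v, z, w] ! Suc i)" if "Suc i < length [v, z, w]" for i
    using that assms(1,2) by (cases i) (auto simp: less_Suc_eq)
  then show ?thesis
    using assms(3,4) by (simp add: is_path_def)
qed

lemma kappa_ge_common_neighbours:
  assumes "finite V" "v \<in> V" "w \<in> V" "v \<noteq> w" "A \<subseteq> V - {v, w}"
    and common: "\<And>z. z \<in> A \<Longrightarrow> adj v z \<and> adj z w"
  shows "card A + (if adj v w then 1 else 0) \<le> kappa V adj v w"
proof -
  define Q where "Q = (\<lambda>z. [v, z, w]) ` A"
  define P where "P = (if adj v w then insert [v, w] Q else Q)"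
  have "finite A"
    using assms(1,5) finite_subset by blast
  have "card Q = card A"
    unfolding Q_def by (rule card_image) (simp add: inj_on_def)
  moreover have "[v, w] \<notin> Q"
    by (auto simp: Q_def)
  ultimately have card_P: "card P = card A + (if adj v w then 1 else 0)"
    using \<open>finite A\<close> by (simp add: P_def Q_def)
  have "is_path V adj v w [v, z, w]" if "z \<in> A" for z
    using that assms(2-5) common[OF that] by (intro is_path_length_3) auto
  moreover have "adj v w \<Longrightarrow> is_path V adj v w [v, w]"
    using assms(2-4) by (simp add: is_path_def)
  moreover have "interior [v, z, w] = {z}" "interior [v, w] = {}" for z
    by (simp_all add: interior_def)
  ultimately have "disjoint_path_family V adj v w P"
    unfolding disjoint_path_family_def P_def Q_def by auto
  moreover have "finite P"
    using \<open>finite A\<close> by (simp add: P_def Q_def)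
  ultimately have "card P \<le> kappa V adj v w"
    by (intro kappa_ge_card[OF assms(1,4)])
  then show ?thesis
    using card_P by simp
qed

lemma kappa_eq_degree_if_nbhd_subset:
  assumes "finite V" "v \<in> V" "w \<in> V" "v \<noteq> w"
    and sym: "\<And>a b. adj a b \<Longrightarrow> adj b a" and irrefl: "\<And>a. \<not> adj a a"
    and nested: "nbhd V adj w - {v} \<subseteq> nbhd V adj v"
  shows "kappa V adj v w = card (nbhd V adj w)"
proof (rule order.antisym)
  have "kappa V adj w v \<le> card (nbhd V adj w)"
    using kappa_le_degree[OF \<open>finite V\<close> not_sym[OF \<open>v \<noteq> w\<close>]] .
  then show "kappa V adj v w \<le> card (nbhd V adj w)"
    using kappa_commute[OF \<open>finite V\<close> sym, where v=v and w=w] by simp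
next
  let ?A = "nbhd V adj w - {v}"
  have "?A \<subseteq> V - {v, w}" "\<And>z. z \<in> ?A \<Longrightarrow> adj v z \<and> adj z w"
    using nested irrefl[of w] sym by (auto simp: nbhd_def)
  from kappa_ge_common_neighbours[OF assms(1-4) this]
  have "card ?A + (if adj v w then 1 else 0) \<le> kappa V adj v w" .
  moreover have "(if adj w v then 1 else 0) = (if adj v w then 1 else (0::nat))"
    using sym[of v w] sym[of w v] by auto
  ultimately show "card (nbhd V adj w) \<le> kappa V adj v w"
    using card_nbhd_remove[OF \<open>finite V\<close> \<open>v \<in> V\<close>, where adj=adj and u=w] by simp
qed

lemma kappa_universal_eq_degree:
  assumes "finite V" "v \<in> V" "t \<in> V" "v \<noteq> t"
    and sym: "\<And>a b. adj a b \<Longrightarrow> adj b a" and irrefl: "\<And>a. \<not> adj a a"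
    and universal: "\<And>z. z \<in> V \<Longrightarrow> z \<noteq> t \<Longrightarrow> adj t z"
  shows "kappa V adj v t = card (nbhd V adj v)"
proof -
  have "nbhd V adj v - {t} \<subseteq> nbhd V adj t"
    using universal by (auto simp: nbhd_def)
  from kappa_eq_degree_if_nbhd_subset[of V t v adj, OF assms(1,3,2) not_sym[OF \<open>v \<noteq> t\<close>]
      sym irrefl this]
  have "kappa V adj t v = card (nbhd V adj v)" .
  then show ?thesis
    using kappa_commute[OF \<open>finite V\<close> sym, where v=v and w=t] by simp
qed

lemma card_nbhd_less_if_psubset:
  assumes "finite V" "v \<in> V" "w \<in> V" and sym: "\<And>a b. adj a b \<Longrightarrow> adj b a"
    and psub: "nbhd V adj v - {w} \<subset> nbhd V adj w - {v}"
  shows "card (nbhd V adj v) < card (nbhd V adj w)"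
proof -
  have "card (nbhd V adj v - {w}) < card (nbhd V adj w - {v})"
    using psub by (rule psubset_card_mono[rotated]) (simp add: finite_nbhd[OF \<open>finite V\<close>])
  moreover have "(if adj v w then 1 else 0) = (if adj w v then 1 else (0::nat))"
    using sym[of v w] sym[of w v] by auto
  ultimately show ?thesis
    using card_nbhd_remove[OF \<open>finite V\<close> \<open>w \<in> V\<close>, where adj=adj and u=v]
      card_nbhd_remove[OF \<open>finite V\<close> \<open>v \<in> V\<close>, where adj=adj and u=w] by linarith
qed

lemma kappa_self: "kappa V adj v v = \<infinity>"
  by (simp add: kappa_def)

lemma kappa_finite: "v \<noteq> w \<Longrightarrow> kappa V adj v w \<noteq> \<infinity>"
  by (simp add: kappa_def)

lemma resolving_mem_if_kappa_eq:
  assumes "resolving V adj W" "a \<in> V" "b \<in> V" "a \<noteq> b"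
    and kappa_eq: "\<And>w. w \<in> set W \<Longrightarrow> w \<noteq> a \<Longrightarrow> w \<noteq> b \<Longrightarrow> kappa V adj a w = kappa V adj b w"
  shows "a \<in> set W \<or> b \<in> set W"
proof (rule ccontr)
  assume "\<not> (a \<in> set W \<or> b \<in> set W)"
  then have "map (kappa V adj a) W = map (kappa V adj b) W"
    using kappa_eq by (intro map_cong) auto
  then have "rep V adj a W = rep V adj b W"
    by (simp add: rep_def)
  then show False
    using assms(1-4) unfolding resolving_def by blast
qed

lemma resolvingI:
  assumes "set W \<subseteq> V"
    and separated: "\<And>a b. a \<in> V - set W \<Longrightarrow> b \<in> V - set W \<Longrightarrow> a \<noteq> b \<Longrightarrow>
      \<exists>w \<in> set W. kappa V adj a w \<noteq> kappa V adj b w"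
  shows "resolving V adj W"
  unfolding resolving_def
proof (intro conjI ballI impI)
  fix a b assume ab: "a \<in> V" "b \<in> V" and "rep V adj a W = rep V adj b W"
  then have kappa_eq: "kappa V adj a w = kappa V adj b w" if "w \<in> set W" for w
    using that by (simp add: rep_def)
  show "a = b"
  proof (rule ccontr)
    assume "a \<noteq> b"
    then have "a \<notin> set W" "b \<notin> set W"
      using kappa_eq[of a] kappa_eq[of b] kappa_self kappa_finite by metis+
    then show False
      using separated[of a b] ab \<open>a \<noteq> b\<close> kappa_eq by blast
  qed
qed (rule assms(1))

lemma cdim_eqI:
  assumes "distinct W" "length W = c" "resolving V adj W"
    and "\<And>W. distinct W \<Longrightarrow> resolving V adj W \<Longrightarrow> c \<le> length W"
  shows "cdim V adj = c"
  unfolding cdim_def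
proof (rule Least_equality)
  show "\<exists>W. distinct W \<and> length W = c \<and> resolving V adj W"
    using assms(1-3) by blast
  show "\<And>c'. \<exists>W. distinct W \<and> length W = c' \<and> resolving V adj W \<Longrightarrow> c \<le> c'"
    using assms(4) by auto
qed

abbreviation thr_kappa :: "nat list \<Rightarrow> nat \<Rightarrow> nat \<Rightarrow> enat" where
  "thr_kappa ys \<equiv> kappa (thr_vertices ys) (thr_adj ys)"

abbreviation thr_nbhd :: "nat list \<Rightarrow> nat \<Rightarrow> nat set" where
  "thr_nbhd ys \<equiv> nbhd (thr_vertices ys) (thr_adj ys)"

definition constant_between :: "nat list \<Rightarrow> nat \<Rightarrow> nat \<Rightarrow> bool" where
  "constant_between ys a b \<longleftrightarrow> (\<forall>i \<in> {a..b}. ys ! i = ys ! a)"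

lemma constant_betweenD: "constant_between ys a b \<Longrightarrow> a \<le> i \<Longrightarrow> i \<le> b \<Longrightarrow> ys ! i = ys ! a"
  unfolding constant_between_def by (meson atLeastAtMost_iff)

lemma thr_adj_commute: "thr_adj ys a b \<longleftrightarrow> thr_adj ys b a"
  by (auto simp: thr_adj_def max.commute)

lemma thr_adj_sym: "thr_adj ys a b \<Longrightarrow> thr_adj ys b a"
  by (simp add: thr_adj_commute)

lemma thr_adj_irrefl: "\<not> thr_adj ys a a"
  by (simp add: thr_adj_def)

lemma finite_thr_vertices: "finite (thr_vertices ys)"
  by (simp add: thr_vertices_def)

lemma thr_nbhd_eq:
  "v < length ys \<Longrightarrow>
    thr_nbhd ys v = {z. z < length ys \<and> z \<noteq> v \<and> ys ! max v z = 1}"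
  by (auto simp: nbhd_def thr_vertices_def thr_adj_def)

lemma thr_adj_transpose:
  assumes const: "constant_between ys a b" and "a < b" "b < length ys"
  shows "thr_adj ys (transpose a b x) (transpose a b y) \<longleftrightarrow> thr_adj ys x y"
proof -
  have "ys ! max a z = ys ! max b z" if "z \<noteq> a" "z \<noteq> b" for z
    using constant_betweenD[OF const, of b] constant_betweenD[OF const, of z] \<open>a < b\<close> that
    by (cases "z < a"; cases "z < b") (auto simp: max_def)
  then have swap1: "thr_adj ys a z \<longleftrightarrow> thr_adj ys b z" if "z \<noteq> a" "z \<noteq> b" for z
    using that \<open>a < b\<close> \<open>b < length ys\<close> by (simp add: thr_adj_def)
  then have swap2: "thr_adj ys z a \<longleftrightarrow> thr_adj ys z b" if "z \<noteq> a" "z \<noteq> b" for z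
    using that by (simp add: thr_adj_commute[of ys z])
  note swap = swap1 swap2
  show ?thesis
    using \<open>a < b\<close>
    by (cases "x = a"; cases "x = b"; cases "y = a"; cases "y = b")
      (simp_all add: swap thr_adj_irrefl thr_adj_commute[of ys a b])
qed

lemma thr_kappa_commute: "thr_kappa ys v w = thr_kappa ys w v"
  by (rule kappa_commute[OF finite_thr_vertices thr_adj_sym])

lemma thr_kappa_twins:
  assumes "constant_between ys a b" "a < b" "b < length ys" "w \<noteq> a" "w \<noteq> b"
  shows "thr_kappa ys a w = thr_kappa ys b w"
proof -
  have "transpose a b ` thr_vertices ys \<subseteq> thr_vertices ys"
    using assms(2,3) by (auto simp: transpose_def thr_vertices_def)
  from kappa_involution_invariant
      [where V = "thr_vertices ys" and adj = "thr_adj ys" and s = "transpose a b",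
       OF finite_thr_vertices transpose_involutory this thr_adj_transpose[OF assms(1-3)]]
  have "thr_kappa ys (transpose a b a) (transpose a b w) = thr_kappa ys a w" .
  then show ?thesis
    using assms(4,5) by simp
qed

lemma thr_kappa_last_eq_degree:
  assumes "ys ! (length ys - 1) = 1" "v < length ys - 1"
  shows "thr_kappa ys v (length ys - 1) = card (thr_nbhd ys v)"
proof (rule kappa_universal_eq_degree
    [where adj = "thr_adj ys", OF finite_thr_vertices _ _ _ thr_adj_sym thr_adj_irrefl])
  show "v \<in> thr_vertices ys" "length ys - 1 \<in> thr_vertices ys" "v \<noteq> length ys - 1"
    using assms(2) by (auto simp: thr_vertices_def)
  show "thr_adj ys (length ys - 1) z" if "z \<in> thr_vertices ys" "z \<noteq> length ys - 1" for z
    using that assms(1) by (auto simp: thr_vertices_def thr_adj_def max_def)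
qed

(* The entry ys ! 0 never affects adjacency, so without ys ! 0 = ys ! 1 the vertices 0 and 1
   would be twins even when ys ! 0 \<noteq> ys ! 1. *)
lemma thr_nonconstant_distinguished:
  assumes bin: "set ys \<subseteq> {0, 1}" and "ys ! 0 = ys ! 1"
    and "v1 < v2" "v2 < length ys" "\<not> constant_between ys v1 v2"
  shows "\<exists>z < length ys. z \<noteq> v1 \<and> z \<noteq> v2 \<and> (thr_adj ys v1 z \<longleftrightarrow> \<not> thr_adj ys v2 z)"
proof -
  have bin_eq: "(ys ! i = 1 \<longleftrightarrow> ys ! j = 1) \<longleftrightarrow> ys ! i = ys ! j"
    if "i < length ys" "j < length ys" for i j
    using subsetD[OF bin nth_mem[OF that(1)]] subsetD[OF bin nth_mem[OF that(2)]] by auto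
  obtain i where i: "v1 < i" "i \<le> v2" "ys ! i \<noteq> ys ! v1"
    using assms(5) unfolding constant_between_def by (metis atLeastAtMost_iff le_neq_implies_less)
  show ?thesis
  proof (cases "ys ! v2 = ys ! v1")
    case True
    then show ?thesis
      using i \<open>v2 < length ys\<close> bin_eq[of i v2]
      by (intro exI[of _ i]) (auto simp: thr_adj_def max_def)
  next
    case False
    show ?thesis
    proof (cases "v1 = 0")
      case True
      then have "1 < v2"
        using False \<open>ys ! 0 = ys ! 1\<close> \<open>v1 < v2\<close> by (cases "v2 = 1") auto
      then show ?thesis
        using False True \<open>ys ! 0 = ys ! 1\<close> \<open>v2 < length ys\<close> bin_eq[of 1 v2]
        by (intro exI[of _ 1]) (auto simp: thr_adj_def max_def)
    next
      case False
      then show ?thesis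
        using \<open>ys ! v2 \<noteq> ys ! v1\<close> \<open>v1 < v2\<close> \<open>v2 < length ys\<close> bin_eq[of v1 v2]
        by (intro exI[of _ "v1 - 1"]) (auto simp: thr_adj_def max_def)
    qed
  qed
qed

lemma thr_nbhd_subset_if_later_dominating:
  assumes "v1 < v2" "v2 < length ys" "ys ! v2 = 1"
  shows "thr_nbhd ys v1 - {v2} \<subseteq> thr_nbhd ys v2 - {v1}"
proof
  fix z assume "z \<in> thr_nbhd ys v1 - {v2}"
  then have "z < length ys" "z \<noteq> v1" "z \<noteq> v2" "ys ! max v1 z = 1"
    by (auto simp: nbhd_def thr_vertices_def thr_adj_def)
  then show "z \<in> thr_nbhd ys v2 - {v1}"
    using assms by (cases "z < v2") (auto simp: thr_nbhd_eq max_def)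
qed

lemma thr_nbhd_subset_if_later_isolated:
  assumes "v1 < v2" "ys ! v2 \<noteq> 1"
  shows "thr_nbhd ys v2 - {v1} \<subseteq> thr_nbhd ys v1 - {v2}"
proof
  fix z assume "z \<in> thr_nbhd ys v2 - {v1}"
  then have "z < length ys" "z \<noteq> v1" "z \<noteq> v2" "ys ! max v2 z = 1"
    by (auto simp: nbhd_def thr_vertices_def thr_adj_def)
  moreover have "v2 < z"
    using \<open>ys ! max v2 z = 1\<close> \<open>z \<noteq> v2\<close> assms(2) by (cases "z < v2") (auto simp: max_def)
  ultimately show "z \<in> thr_nbhd ys v1 - {v2}"
    using assms(1) by (auto simp: thr_nbhd_eq max_def)
qed

lemma thr_degree_neq:
  assumes "set ys \<subseteq> {0, 1}" "ys ! 0 = ys ! 1"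
    and "v1 < v2" "v2 < length ys" "\<not> constant_between ys v1 v2"
  shows "card (thr_nbhd ys v1) \<noteq> card (thr_nbhd ys v2)"
proof -
  let ?N = "thr_nbhd ys"
  have V: "v1 \<in> thr_vertices ys" "v2 \<in> thr_vertices ys"
    using assms(3,4) by (auto simp: thr_vertices_def)
  obtain z where "z < length ys" "z \<noteq> v1" "z \<noteq> v2" and z: "thr_adj ys v1 z \<longleftrightarrow> \<not> thr_adj ys v2 z"
    using thr_nonconstant_distinguished[OF assms] by blast
  then have z_in: "z \<in> ?N v1 - {v2} \<longleftrightarrow> z \<notin> ?N v2 - {v1}"
    by (auto simp: nbhd_def thr_vertices_def)
  show ?thesis
  proof (cases "ys ! v2 = 1")
    case True
    then have "?N v1 - {v2} \<subset> ?N v2 - {v1}"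
      using thr_nbhd_subset_if_later_dominating[OF \<open>v1 < v2\<close> \<open>v2 < length ys\<close>] z_in by blast
    then show ?thesis
      using card_nbhd_less_if_psubset[where adj = "thr_adj ys", OF finite_thr_vertices V thr_adj_sym]
      by simp
  next
    case False
    then have "?N v2 - {v1} \<subset> ?N v1 - {v2}"
      using thr_nbhd_subset_if_later_isolated[OF \<open>v1 < v2\<close>] z_in by blast
    then show ?thesis
      using card_nbhd_less_if_psubset
          [where adj = "thr_adj ys", OF finite_thr_vertices V(2,1) thr_adj_sym]
      by simp
  qed
qed

lemma thr_resolving_remove_nonconstant:
  assumes "set ys \<subseteq> {0, 1}" "ys ! 0 = ys ! 1" "ys ! (length ys - 1) = 1"
    and R: "R \<subseteq> thr_vertices ys" "length ys - 1 \<notin> R"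
    and nonconst: "\<And>a b. a \<in> R \<Longrightarrow> b \<in> R \<Longrightarrow> a < b \<Longrightarrow> \<not> constant_between ys a b"
  shows "resolving (thr_vertices ys) (thr_adj ys) (sorted_list_of_set (thr_vertices ys - R))"
proof (rule resolvingI)
  let ?W = "sorted_list_of_set (thr_vertices ys - R)"
  have set_W: "set ?W = thr_vertices ys - R"
    by (simp add: finite_thr_vertices)
  then show "set ?W \<subseteq> thr_vertices ys" by blast
  have kappa_last:
    "thr_kappa ys a (length ys - 1) = card (thr_nbhd ys a)"
    if "a \<in> R" for a
  proof -
    have "a < length ys" "a \<noteq> length ys - 1"
      using that R by (auto simp: thr_vertices_def)
    then have "a < length ys - 1"
      by linarith
    then show ?thesis
      by (rule thr_kappa_last_eq_degree[OF assms(3)])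
  qed
  fix a b assume ab: "a \<in> thr_vertices ys - set ?W" "b \<in> thr_vertices ys - set ?W" "a \<noteq> b"
  then have "a \<in> R" "b \<in> R" "a < length ys" "b < length ys"
    using set_W by (auto simp: thr_vertices_def)
  then have "length ys - 1 \<in> set ?W"
    using set_W R(2) by (auto simp: thr_vertices_def)
  moreover have "card (thr_nbhd ys a) \<noteq> card (thr_nbhd ys b)"
    using \<open>a \<noteq> b\<close> thr_degree_neq[OF assms(1,2)] nonconst \<open>a \<in> R\<close> \<open>b \<in> R\<close>
      \<open>a < length ys\<close> \<open>b < length ys\<close>
    by (metis linorder_neq_iff)
  ultimately show "\<exists>w \<in> set ?W. thr_kappa ys a w \<noteq> thr_kappa ys b w"
    using kappa_last[OF \<open>a \<in> R\<close>] kappa_last[OF \<open>b \<in> R\<close>] by (intro bexI[of _ "length ys - 1"]) auto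
qed

lemma thr_kappa_eq_kappa_last:
  assumes last: "ys ! (length ys - 1) = 1" and "u < length ys - 1"
    and zero_tail: "\<And>y. L \<le> y \<Longrightarrow> y < length ys - 1 \<Longrightarrow> ys ! y = 0"
    and adj_u: "\<And>z. z < L \<Longrightarrow> z \<noteq> u \<Longrightarrow> thr_adj ys u z"
    and "w < length ys - 1" "w \<noteq> u"
  shows "thr_kappa ys u w = thr_kappa ys (length ys - 1) w"
proof -
  let ?N = "thr_nbhd ys"
  have "?N w - {u} \<subseteq> ?N u"
  proof
    fix z assume z: "z \<in> ?N w - {u}"
    then have "z < length ys" "thr_adj ys w z"
      by (auto simp: nbhd_def thr_vertices_def)
    show "z \<in> ?N u"
    proof (cases "z = length ys - 1")
      case True
      then show ?thesis
        using last \<open>u < length ys - 1\<close> by (auto simp: thr_nbhd_eq max_def)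
    next
      case False
      then have "max w z < length ys - 1" "ys ! max w z = 1"
        using \<open>z < length ys\<close> \<open>w < length ys - 1\<close> \<open>thr_adj ys w z\<close> by (auto simp: thr_adj_def)
      then have "\<not> L \<le> max w z"
        using zero_tail[of "max w z"] by auto
      then have "z < L"
        by simp
      then show ?thesis
        using adj_u[of z] z by (auto simp: nbhd_def thr_vertices_def)
    qed
  qed
  moreover have "u \<in> thr_vertices ys" "w \<in> thr_vertices ys" "u \<noteq> w"
    using assms(2,5,6) by (auto simp: thr_vertices_def)
  ultimately have "thr_kappa ys u w = card (?N w)"
    using kappa_eq_degree_if_nbhd_subset
        [where adj = "thr_adj ys", OF finite_thr_vertices _ _ _ thr_adj_sym thr_adj_irrefl]
    by blast
  also have "\<dots> = thr_kappa ys (length ys - 1) w"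
    using thr_kappa_last_eq_degree[OF last \<open>w < length ys - 1\<close>] thr_kappa_commute[of ys w] by simp
  finally show ?thesis .
qed

(* Block j, for 1 \<le> j \<le> m, occupies the positions block_start k j ..< block_start k (Suc j)
   of block_seq m x k. *)
definition block_start :: "(nat \<Rightarrow> nat) \<Rightarrow> nat \<Rightarrow> nat" where
  "block_start k j = (\<Sum>l = 1..<j. k l)"

definition block_of :: "(nat \<Rightarrow> nat) \<Rightarrow> nat \<Rightarrow> nat" where
  "block_of k i = (LEAST j. i < block_start k (Suc j))"

lemma block_start_Suc: "1 \<le> j \<Longrightarrow> block_start k (Suc j) = block_start k j + k j"
  by (simp add: block_start_def)

lemma block_start_mono: "j \<le> j' \<Longrightarrow> block_start k j \<le> block_start k j'"
  unfolding block_start_def by (rule sum_mono2) auto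

lemma block_start_less:
  assumes "1 \<le> j" "j < j'" "0 < k j"
  shows "block_start k j < block_start k j'"
  using block_start_Suc[OF assms(1), of k] block_start_mono[of "Suc j" j' k] assms(2,3) by simp

lemma length_block_seq: "length (block_seq m x k) = block_start k (Suc m)"
  by (simp add: block_seq_def block_start_def length_concat comp_def
      flip: sum_set_upt_conv_sum_list_nat)

lemma nth_block_seq:
  assumes "1 \<le> j" "j \<le> m" "block_start k j \<le> i" "i < block_start k (Suc j)"
  shows "block_seq m x k ! i = x j"
  using assms
proof (induction m)
  case 0
  then show ?case by simp
next
  case (Suc m)
  have append: "block_seq (Suc m) x k = block_seq m x k @ replicate (k (Suc m)) (x (Suc m))"
    by (simp add: block_seq_def)
  show ?case
  proof (cases "j \<le> m")
    case True
    then have "i < length (block_seq m x k)"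
      using Suc.prems(4) block_start_mono[of "Suc j" "Suc m" k] by (simp add: length_block_seq)
    then show ?thesis
      using Suc True by (simp add: append nth_append)
  next
    case False
    then have "j = Suc m" using Suc.prems(2) by simp
    then show ?thesis
      using Suc.prems(3,4) block_start_Suc[of "Suc m" k]
      by (simp add: append nth_append length_block_seq)
  qed
qed

lemma block_of_bounds:
  assumes "i < block_start k (Suc m)"
  shows "1 \<le> block_of k i" "block_of k i \<le> m"
    and "block_start k (block_of k i) \<le> i" "i < block_start k (Suc (block_of k i))"
proof -
  show upper: "i < block_start k (Suc (block_of k i))"
    unfolding block_of_def using assms by (rule LeastI)
  show "block_of k i \<le> m"
    unfolding block_of_def using assms by (rule Least_le)
  show "1 \<le> block_of k i"
    using upper by (cases "block_of k i") (auto simp: block_start_def)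
  then obtain j where j: "block_of k i = Suc j"
    using not0_implies_Suc by fastforce
  then have "\<not> i < block_start k (Suc j)"
    unfolding block_of_def by (metis lessI not_less_Least)
  then show "block_start k (block_of k i) \<le> i"
    using j by simp
qed

locale alternating_blocks =
  fixes m :: nat and x k :: "nat \<Rightarrow> nat"
  assumes m_pos: "m \<ge> 1"
    and x_binary: "\<forall>j\<in>{1..m}. x j \<in> {0, 1}"
    and x_alternating: "\<forall>j. 1 \<le> j \<and> j < m \<longrightarrow> x j \<noteq> x (Suc j)"
    and x_last: "x m = 1"
    and k_pos: "\<forall>j\<in>{1..m}. k j > 0"
    and k_first: "k 1 \<ge> 2"
begin

abbreviation "ys \<equiv> block_seq m x k"
abbreviation "V \<equiv> thr_vertices ys"
abbreviation "t \<equiv> length ys - 1"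

lemma x_eq_parity: "1 \<le> j \<Longrightarrow> j \<le> m \<Longrightarrow> x j = (if even (m - j) then 1 else 0)"
proof (induction "m - j" arbitrary: j)
  case 0
  then show ?case using x_last by simp
next
  case (Suc d)
  then have "x (Suc j) = (if even (m - Suc j) then 1 else 0)" "x j \<noteq> x (Suc j)" "x j \<in> {0, 1}"
    using x_alternating x_binary by auto
  then show ?case
    using Suc.hyps(2) by (auto simp: Suc_diff_Suc[symmetric])
qed

lemma k_last_pos: "k m > 0"
  using k_pos m_pos by simp

lemma length_ys: "length ys = block_start k m + k m"
  using length_block_seq block_start_Suc m_pos by simp

lemma m_le_length: "m \<le> length ys"
proof -
  have "(\<Sum>j = 1..<Suc m. 1::nat) \<le> block_start k (Suc m)"
    unfolding block_start_def using k_pos by (intro sum_mono) (simp add: Suc_le_eq)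
  then show ?thesis
    by (simp add: length_block_seq)
qed

lemma nth_ys: "i < length ys \<Longrightarrow> ys ! i = x (block_of k i)"
  using block_of_bounds[of i k m] nth_block_seq length_block_seq by metis

lemma block_of_range: "i \<in> V \<Longrightarrow> block_of k i \<in> {1..m}"
  using block_of_bounds(1,2)[of i k m] by (simp add: thr_vertices_def length_block_seq)

lemma block_of_last: "block_of k t = m"
proof -
  have "t < block_start k (Suc m)" "block_start k m \<le> t"
    using length_ys length_block_seq k_last_pos by simp_all
  then show ?thesis
    using block_of_bounds[of t k m] block_start_mono[of "Suc (block_of k t)" m k] by fastforce
qed

lemma ys_binary: "set ys \<subseteq> {0, 1}"
proof
  fix a assume "a \<in> set ys"
  then obtain i where "i < length ys" "a = x (block_of k i)"
    using nth_ys by (auto simp: in_set_conv_nth)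
  then show "a \<in> {0, 1}"
    using x_binary block_of_range[of i] by (simp add: thr_vertices_def)
qed

lemma ys_first: "ys ! 0 = ys ! 1"
  using nth_block_seq[of 1 m k _ x] m_pos k_first block_start_Suc[of 1 k]
  by (simp add: block_start_def)

lemma ys_last: "ys ! t = 1"
  using nth_block_seq[of m m k t x] m_pos k_last_pos x_last block_start_Suc[of m k] length_ys
  by simp

lemma block_start_in_block:
  "j \<in> {1..m} \<Longrightarrow> block_start k j < length ys \<and> ys ! block_start k j = x j"
  using nth_block_seq[of j m k "block_start k j" x] block_start_Suc[of j k] k_pos
    block_start_mono[of "Suc j" "Suc m" k] length_block_seq
  by force

lemma inj_on_block_start: "inj_on (block_start k) {1..m}"
proof (rule linorder_inj_onI')
  fix i j assume "i \<in> {1..m}" "j \<in> {1..m}" "i < j"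
  then show "block_start k i \<noteq> block_start k j"
    using block_start_less[of i j k] k_pos by simp
qed

lemma block_starts_nonconstant:
  assumes "i \<in> {1..m}" "j \<in> {1..m}" "i < j"
  shows "\<not> constant_between ys (block_start k i) (block_start k j)"
proof
  assume "constant_between ys (block_start k i) (block_start k j)"
  moreover have "block_start k (Suc i) \<in> {block_start k i..block_start k j}"
    using assms by (auto intro: block_start_mono)
  ultimately have "ys ! block_start k (Suc i) = ys ! block_start k i"
    unfolding constant_between_def by blast
  then show False
    using block_start_in_block[of i] block_start_in_block[of "Suc i"] x_alternating assms by auto
qed

lemma same_block_constant:
  assumes "u < u'" "u' < length ys" "block_of k u = block_of k u'"
  shows "constant_between ys u u'"
  unfolding constant_between_def
proof
  fix i assume "i \<in> {u..u'}"
  then have "1 \<le> block_of k u" "block_of k u \<le> m"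
    "block_start k (block_of k u) \<le> i" "i < block_start k (Suc (block_of k u))"
    using block_of_bounds[of u k m] block_of_bounds[of u' k m] assms
    by (auto simp: length_block_seq)
  then show "ys ! i = ys ! u"
    using nth_block_seq nth_ys[of u] assms by simp
qed

lemma card_outside_resolving_le:
  assumes "resolving V (thr_adj ys) W" "block_of k ` (V - set W) \<subseteq> B" "finite B"
  shows "card (V - set W) \<le> card B"
proof -
  have "inj_on (block_of k) (V - set W)"
  proof (rule linorder_inj_onI')
    fix u u' assume "u < u'" and u: "u \<in> V - set W" "u' \<in> V - set W"
    show "block_of k u \<noteq> block_of k u'"
    proof
      assume "block_of k u = block_of k u'"
      then have "constant_between ys u u'"
        using same_block_constant \<open>u < u'\<close> u by (simp add: thr_vertices_def)
      then have "u \<in> set W \<or> u' \<in> set W"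
        using \<open>u < u'\<close> u thr_kappa_twins
        by (intro resolving_mem_if_kappa_eq[OF assms(1)]) (auto simp: thr_vertices_def)
      then show False
        using u by blast
    qed
  qed
  then show ?thesis
    using card_inj_on_le assms(2,3) by blast
qed

lemma length_resolving_ge:
  assumes "distinct W" "resolving V (thr_adj ys) W" "block_of k ` (V - set W) \<subseteq> B" "finite B"
  shows "length ys - card B \<le> length W"
proof -
  have "set W \<subseteq> V"
    using assms(2) by (simp add: resolving_def)
  then have "card (V - set W) = card V - length W" "length W \<le> card V"
    using \<open>distinct W\<close> card_mono[OF finite_thr_vertices]
    by (simp_all add: card_Diff_subset distinct_card[symmetric])
  then have "length W = card V - card (V - set W)"
    by simp
  then show ?thesis
    using card_outside_resolving_le[OF assms(2-4)] by (simp add: thr_vertices_def)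
qed

definition mimic_block :: nat where
  "mimic_block = (if m = 2 then 1 else m - 2)"

lemma m_ge_2_if_last_block_single: "k m = 1 \<Longrightarrow> m \<ge> 2"
  using k_first m_pos by (cases "m = 1") auto

lemma last_eq_block_start_if_single: "k m = 1 \<Longrightarrow> t = block_start k m"
  using length_ys by simp

(* The vertices of block m - 2 are adjacent to everything before block m - 1, whose vertices
   (all added as isolated) see only t; for m = 2 there is nothing before block 1. *)
lemma kappa_mimic_block_eq_kappa_last:
  assumes "k m = 1" "u \<in> V" "block_of k u = mimic_block" "w \<in> V" "w \<noteq> u" "w \<noteq> t"
  shows "thr_kappa ys u w = thr_kappa ys t w"
proof -
  have "m \<ge> 2" and t_eq: "t = block_start k m"
    using m_ge_2_if_last_block_single last_eq_block_start_if_single assms(1) by auto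
  have u: "block_start k mimic_block \<le> u" "u < block_start k (Suc mimic_block)"
    using block_of_bounds[of u k m] assms(2,3) by (auto simp: thr_vertices_def length_block_seq)
  have "Suc mimic_block \<le> m"
    using \<open>m \<ge> 2\<close> by (auto simp: mimic_block_def)
  then have "u < t"
    using u(2) block_start_mono[of "Suc mimic_block" m k] t_eq by simp
  show ?thesis
  proof (rule thr_kappa_eq_kappa_last[OF ys_last \<open>u < t\<close>])
    fix y assume "block_start k (m - 1) \<le> y" "y < t"
    then show "ys ! y = 0"
      using nth_block_seq[of "m - 1" m k y x] x_eq_parity[of "m - 1"]
        block_start_Suc[of "m - 1" k] t_eq \<open>m \<ge> 2\<close>
      by simp
  next
    fix z assume z: "z < block_start k (m - 1)" "z \<noteq> u"
    then have "m \<noteq> 2"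
      by (auto simp: block_start_def)
    then have "1 \<le> m - 2" "Suc (m - 2) = m - 1" "mimic_block = m - 2"
      using \<open>m \<ge> 2\<close> by (auto simp: mimic_block_def)
    then have "ys ! max u z = 1"
      using nth_block_seq[of "m - 2" m k "max u z" x] x_eq_parity[of "m - 2"] u z
      by (auto simp: max_def)
    then show "thr_adj ys u z"
      using z \<open>u < t\<close> block_start_mono[of "m - 1" m k] t_eq by (auto simp: thr_adj_def)
  next
    show "w < t" "w \<noteq> u"
      using assms(4-6) by (auto simp: thr_vertices_def)
  qed
qed

lemma length_resolving_ge_if_last_block_single:
  assumes "k m = 1" "distinct W" "resolving V (thr_adj ys) W"
  shows "length ys - (m - 1) \<le> length W"
proof -
  have "mimic_block \<in> {1..m}" "mimic_block \<noteq> m"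
    using m_ge_2_if_last_block_single[OF assms(1)] by (auto simp: mimic_block_def)
  obtain c where "c \<in> {1..m}" "block_of k ` (V - set W) \<subseteq> {1..m} - {c}"
  proof (cases "t \<in> set W")
    case True
    have "block_of k v \<noteq> m" if "v \<in> V - set W" for v
    proof
      assume "block_of k v = m"
      then have "block_start k m \<le> v"
        using block_of_bounds(3)[of v k m] that by (auto simp: thr_vertices_def length_block_seq)
      then have "v = t"
        using that last_eq_block_start_if_single[OF assms(1)] by (auto simp: thr_vertices_def)
      then show False
        using True that by blast
    qed
    then show ?thesis
      using block_of_range m_pos by (intro that[of m]) auto
  next
    case False
    have "u \<in> set W" if "u \<in> V" "block_of k u = mimic_block" for u
    proof -
      have "t \<in> V" "u \<noteq> t"
        using block_of_last that m_le_length m_pos \<open>mimic_block \<noteq> m\<close>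
        by (auto simp: thr_vertices_def)
      then show ?thesis
        using resolving_mem_if_kappa_eq[OF assms(3) that(1)] False assms(3)
          kappa_mimic_block_eq_kappa_last[OF assms(1) that]
        by (auto simp: resolving_def)
    qed
    then show ?thesis
      using block_of_range \<open>mimic_block \<in> {1..m}\<close> by (intro that[of mimic_block]) auto
  qed
  then show ?thesis
    using length_resolving_ge[OF assms(2,3), of "{1..m} - {c}"] by simp
qed

lemma length_resolving_ge_blocks:
  assumes "distinct W" "resolving V (thr_adj ys) W"
  shows "length ys - m \<le> length W"
proof -
  have "block_of k ` (V - set W) \<subseteq> {1..m}"
    using block_of_range by blast
  from length_resolving_ge[OF assms this finite_atLeastAtMost] show ?thesis
    by simp
qed

lemma last_not_early_block_start: "t \<notin> block_start k ` {1..m - 1}"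
proof
  assume "t \<in> block_start k ` {1..m - 1}"
  then obtain j where "j \<in> {1..m - 1}" "t = block_start k j"
    by blast
  moreover from this(1) have "1 \<le> j" "j < m" "0 < k j"
    using k_pos by auto
  then have "block_start k j < block_start k m"
    by (rule block_start_less)
  ultimately show False
    using length_ys k_last_pos by simp
qed

lemma resolving_remove_block_starts:
  assumes "J \<subseteq> {1..m}" "t \<notin> block_start k ` J"
  shows "\<exists>W. distinct W \<and> length W = length ys - card J \<and> resolving V (thr_adj ys) W"
proof -
  define R where "R = block_start k ` J"
  have "R \<subseteq> V"
    using block_start_in_block assms(1) by (auto simp: R_def thr_vertices_def)
  have "card R = card J"
    unfolding R_def using card_image[OF inj_on_subset[OF inj_on_block_start assms(1)]] .
  have "\<not> constant_between ys a a'" if a: "a \<in> R" "a' \<in> R" "a < a'" for a a'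
  proof -
    obtain i j where "i \<in> J" "j \<in> J" "a = block_start k i" "a' = block_start k j"
      using a(1,2) by (auto simp: R_def)
    moreover have "i < j"
    proof (rule ccontr)
      assume "\<not> i < j"
      then have "block_start k j \<le> block_start k i"
        by (intro block_start_mono) simp
      then show False
        using a(3) calculation by simp
    qed
    ultimately show ?thesis
      using block_starts_nonconstant assms(1) by blast
  qed
  then have "resolving V (thr_adj ys) (sorted_list_of_set (V - R))"
    using thr_resolving_remove_nonconstant[OF ys_binary ys_first ys_last \<open>R \<subseteq> V\<close>] assms(2)
    by (simp add: R_def)
  moreover have "length (sorted_list_of_set (V - R)) = length ys - card J"
    using \<open>R \<subseteq> V\<close> \<open>card R = card J\<close> finite_thr_vertices
    by (simp add: card_Diff_subset finite_subset thr_vertices_def)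
  ultimately show ?thesis
    using distinct_sorted_list_of_set by blast
qed

lemma cdim_eq:
  "cdim V (thr_adj ys) = (if k m > 1 then length ys - m else length ys - m + 1)"
proof (cases "k m > 1")
  case True
  have "{1..m} = insert m {1..m - 1}"
    using m_pos by auto
  then have "t \<notin> block_start k ` {1..m}"
    using last_not_early_block_start length_ys True by auto
  then obtain W where W: "distinct W" "length W = length ys - m" "resolving V (thr_adj ys) W"
    using resolving_remove_block_starts[of "{1..m}"] by auto
  have "cdim V (thr_adj ys) = length ys - m"
    by (rule cdim_eqI[OF W length_resolving_ge_blocks])
  then show ?thesis
    using True by simp
next
  case False
  then have "k m = 1"
    using k_last_pos by simp
  obtain W where W: "distinct W" "length W = length ys - (m - 1)" "resolving V (thr_adj ys) W"
    using resolving_remove_block_starts[OF _ last_not_early_block_start] by auto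
  have "cdim V (thr_adj ys) = length ys - (m - 1)"
    by (rule cdim_eqI[OF W length_resolving_ge_if_last_block_single[OF \<open>k m = 1\<close>]])
  then show ?thesis
    using False m_le_length m_pos by simp
qed

end

theorem mainTheorem5:
  fixes m :: nat and x k :: "nat \<Rightarrow> nat"
  assumes "m \<ge> 1"
    and "\<forall>j\<in>{1..m}. x j \<in> {0, 1}"
    and "\<forall>j. 1 \<le> j \<and> j < m \<longrightarrow> x j \<noteq> x (Suc j)"
    and "x m = 1"
    and "\<forall>j\<in>{1..m}. k j > 0"
    and "k 1 \<ge> 2"
  shows "let ys = block_seq m x k; n = (\<Sum>j=1..m. k j) in
    cdim (thr_vertices ys) (thr_adj ys) = (if k m > 1 then n - m else n - m + 1)"
proof -
  interpret alternating_blocks m x k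
    using assms by unfold_locales
  have "length (block_seq m x k) = (\<Sum>j=1..m. k j)"
    by (simp add: length_block_seq block_start_def atLeastLessThanSuc_atLeastAtMost)
  then show ?thesis
    using cdim_eq by (simp add: Let_def)
qed

end
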